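(* Let $n\ge2$, let $\overline{G}_n=\overline{H}_0\overline{H}_1\cdots\overline{H}_{n-1}$ be a polyphenyl hexagonal chain with $n$ hexagons, and let $\overline{G}_{n-1}=\overline{H}_0\cdots\overline{H}_{n-2}$. Then $$W(\overline{G}_n)=W(\overline{G}_{n-1})+6\,W(\overline{G}_{n-1},t_{n-1})+90n-63,$$ and for every vertex $t_n$ of $\overline{H}_{n-1}$ other than $c_{n-1}$, $$W(\overline{G}_n,t_n)=W(\overline{G}_{n-1},t_{n-1})+g(t_n),$$ where $g(t_n)=12(n-1)+9$ if $t_n$ is an ortho-vertex $o_{n-1}$, $g(t_n)=18(n-1)+9$ if $t_n$ is a meta-vertex $m_{n-1}$, and $g(t_n)=24(n-1)+9$ if $t_n$ is the para-vertex $p_{n-1}$ of $\overline{H}_{n-1}$. Moreover $W(\overline{G}_1)=W(\overline{H}_0)=27$ and $W(\overline{G}_1,t_1)=g(t_1)=9$ for any vertex $t_1$ of $\overline{H}_0$.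
   Context: All graphs are simple and connected; $d(u,v)$ is the shortest-path distance; $W(G,v)=\sum_{u\in V(G)}d_G(u,v)$ and the Wiener index is $W(G)=\sum_{\{u,v\}\subseteq V(G)}d_G(u,v)$. A polyphenyl hexagonal chain $\overline{G}_n=\overline{H}_0\overline{H}_1\cdots\overline{H}_{n-1}$ of length $n$ consists of pairwise vertex-disjoint hexagons (6-cycles) $\overline{H}_0,\dots,\overline{H}_{n-1}$ together with cut-edges: $\overline{G}_1=\overline{H}_0$, and for $k\ge1$, $\overline{G}_{k+1}$ is obtained from $\overline{G}_k$ by adding the hexagon $\overline{H}_k$ and a cut-edge joining a vertex $c_k$ of $\overline{H}_k$ to a vertex $t_k$ of $\overline{H}_{k-1}$ (the tail), where for $k\ge2$, $t_k\ne c_{k-1}$ (i.e. $t_k$ is a non-cut-vertex of the terminal hexagon $\overline{H}_{k-1}$). For $k\ge1$, a vertex of $\overline{H}_k$ at distance $1$, $2$, $3$ from $c_k$ is an ortho-, meta-, para-vertex of $\overline{H}_k$, denoted $o_k,m_k,p_k$. *)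

theory Defs
  imports Main
begin

inductive walk :: "'a set \<Rightarrow> ('a \<Rightarrow> 'a \<Rightarrow> bool) \<Rightarrow> 'a \<Rightarrow> 'a \<Rightarrow> nat \<Rightarrow> bool"
  for V E where
  walk_refl: "u \<in> V \<Longrightarrow> walk V E u u 0"
| walk_step: "u \<in> V \<Longrightarrow> E u w \<Longrightarrow> walk V E w v k \<Longrightarrow> walk V E u v (Suc k)"

definition gdist :: "'a set \<Rightarrow> ('a \<Rightarrow> 'a \<Rightarrow> bool) \<Rightarrow> 'a \<Rightarrow> 'a \<Rightarrow> nat" where
  "gdist V E u v = (LEAST k. walk V E u v k)"

definition transmission :: "'a set \<Rightarrow> ('a \<Rightarrow> 'a \<Rightarrow> bool) \<Rightarrow> 'a \<Rightarrow> nat" where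
  "transmission V E v = (\<Sum>u\<in>V. gdist V E u v)"

text \<open>Wiener index: sum over unordered pairs {u,v}, i.e. half the sum over ordered pairs
  (the diagonal contributes 0).\<close>
definition wiener :: "'a set \<Rightarrow> ('a \<Rightarrow> 'a \<Rightarrow> bool) \<Rightarrow> nat" where
  "wiener V E = (\<Sum>u\<in>V. \<Sum>v\<in>V. gdist V E u v) div 2"

text \<open>Hexagon H_k has vertices (k,0),...,(k,5) with (k,i) adjacent to (k,(i+1) mod 6).
  For k \<ge> 1 the cut-edge joins c k (a vertex of H_k) with t k (a vertex of H_(k-1)).\<close>
definition phc_V :: "nat \<Rightarrow> (nat \<times> nat) set" where
  "phc_V n = {(k, i). k < n \<and> i < 6}"

definition phc_E :: "(nat \<Rightarrow> nat) \<Rightarrow> (nat \<Rightarrow> nat) \<Rightarrow> nat \<times> nat \<Rightarrow> nat \<times> nat \<Rightarrow> bool" where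
  "phc_E c t x y =
     (case x of (k, i) \<Rightarrow> case y of (k', i') \<Rightarrow>
        (k = k' \<and> (i' = (i + 1) mod 6 \<or> i = (i' + 1) mod 6))
      \<or> (k' = k + 1 \<and> i = t k' \<and> i' = c k')
      \<or> (k = k' + 1 \<and> i' = t k \<and> i = c k))"

definition phc_valid :: "nat \<Rightarrow> (nat \<Rightarrow> nat) \<Rightarrow> (nat \<Rightarrow> nat) \<Rightarrow> bool" where
  "phc_valid n c t =
     ((\<forall>k. 1 \<le> k \<and> k < n \<longrightarrow> c k < 6 \<and> t k < 6)
      \<and> (\<forall>k. 2 \<le> k \<and> k < n \<longrightarrow> t k \<noteq> c (k - 1)))"

end

theory Submission
  imports Defs
begin

text \<open>Distances in a polyphenyl chain are explicit: a shortest path between hexagons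
  \<open>a < b\<close> runs around \<open>H\<^sub>a\<close> to its tail vertex, across the cut-edge, and so on up to \<open>H\<^sub>b\<close>.
  Consequently every vertex of the new hexagon \<open>H\<^sub>m\<close> lies at distance
  \<open>d(u, t\<^sub>m) + 1 + d(c\<^sub>m, x)\<close> from every old vertex \<open>u\<close>. Summing this over \<open>u\<close> and over the
  six vertices of \<open>H\<^sub>m\<close>, using that the distances inside a hexagon from a fixed vertex sum
  to 9, gives both recurrences; for \<open>m = 0\<close> the old graph is empty and they reduce to the
  values for a single hexagon.\<close>

lemma walk_in_V: "walk V E u v k \<Longrightarrow> u \<in> V \<and> v \<in> V"
  by (induction rule: walk.induct) auto

lemma walk_snoc: "walk V E u v k \<Longrightarrow> E v w \<Longrightarrow> w \<in> V \<Longrightarrow> walk V E u w (Suc k)"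
  by (induction rule: walk.induct) (auto intro: walk.intros)

lemma walk_append: "walk V E u w k \<Longrightarrow> walk V E w v l \<Longrightarrow> walk V E u v (k + l)"
  by (induction rule: walk.induct) (auto intro: walk.intros)

lemma walk_rev:
  assumes "\<And>x y. E x y \<Longrightarrow> E y x" and "walk V E u v k"
  shows "walk V E v u k"
  using assms(2) by (induction rule: walk.induct) (auto intro: walk.intros walk_snoc assms(1))

lemma gdist_sym:
  assumes "\<And>x y. E x y \<Longrightarrow> E y x"
  shows "gdist V E u v = gdist V E v u"
proof -
  have "walk V E u v = walk V E v u"
    using walk_rev[where E = E, OF assms] by blast
  then show ?thesis
    unfolding gdist_def by simp
qed

lemma walk_length_ge:
  assumes "walk V E u v k"
    and "\<And>x y. x \<in> V \<Longrightarrow> y \<in> V \<Longrightarrow> E x y \<Longrightarrow> f x \<le> f y + 1" and "f v = 0"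
  shows "f u \<le> k"
  using assms(1,3)
proof (induction rule: walk.induct)
  case (walk_refl u)
  then show ?case by simp
next
  case (walk_step u w v k)
  have "w \<in> V"
    using walk_in_V[OF walk_step.hyps(3)] ..
  then have "f u \<le> f w + 1"
    using assms(2) walk_step.hyps(1,2) by blast
  with walk_step.IH walk_step.prems show ?case by simp
qed

lemma gdist_eqI:
  assumes "walk V E u v (f u)"
    and "\<And>x y. x \<in> V \<Longrightarrow> y \<in> V \<Longrightarrow> E x y \<Longrightarrow> f x \<le> f y + 1" and "f v = 0"
  shows "gdist V E u v = f u"
  unfolding gdist_def
proof (rule Least_equality)
  show "walk V E u v (f u)"
    by (fact assms(1))
  show "f u \<le> k" if "walk V E u v k" for k
    using walk_length_ge[where f = f, OF that assms(2,3)] .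
qed

definition hex_dist :: "nat \<Rightarrow> nat \<Rightarrow> nat" where
  "hex_dist i j = min ((j + 6 - i) mod 6) ((i + 6 - j) mod 6)"

lemma less_6_cases: "(i::nat) < 6 \<longleftrightarrow> i = 0 \<or> i = 1 \<or> i = 2 \<or> i = 3 \<or> i = 4 \<or> i = 5"
  by auto

lemma sum_lessThan_6: "(\<Sum>j<(6::nat). f j) = f 0 + f 1 + f 2 + f 3 + f 4 + (f 5 :: nat)"
  by (simp add: eval_nat_numeral)

lemma hex_dist_self [simp]: "hex_dist i i = 0"
  by (simp add: hex_dist_def)

lemma hex_dist_commute: "hex_dist i j = hex_dist j i"
  by (simp add: hex_dist_def min.commute)

lemma hex_dist_triangle: "i < 6 \<Longrightarrow> j < 6 \<Longrightarrow> k < 6 \<Longrightarrow> hex_dist i j \<le> hex_dist i k + hex_dist k j"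
  unfolding less_6_cases by (elim disjE; simp add: hex_dist_def)

lemma hex_dist_adjacent:
  "i < 6 \<Longrightarrow> j < 6 \<Longrightarrow> j = (i + 1) mod 6 \<or> i = (j + 1) mod 6 \<Longrightarrow> hex_dist i j \<le> 1"
  unfolding less_6_cases by (elim disjE; simp add: hex_dist_def)

lemma hex_dist_cases:
  "i < 6 \<Longrightarrow> j < 6 \<Longrightarrow> i \<noteq> j \<Longrightarrow> hex_dist i j = 1 \<or> hex_dist i j = 2 \<or> hex_dist i j = 3"
  unfolding less_6_cases by (elim disjE; simp add: hex_dist_def)

lemma sum_hex_dist_to: "j < 6 \<Longrightarrow> (\<Sum>i<6. hex_dist i j) = 9"
  unfolding sum_lessThan_6 less_6_cases by (elim disjE; simp add: hex_dist_def)

lemma sum_hex_dist_from: "i < 6 \<Longrightarrow> (\<Sum>j<6. hex_dist i j) = 9"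
  unfolding sum_lessThan_6 less_6_cases by (elim disjE; simp add: hex_dist_def)

lemma sum_sum_hex_dist: "(\<Sum>i<6. \<Sum>j<6. hex_dist i j) = 54"
  unfolding sum_lessThan_6 by (simp add: hex_dist_def)

lemma add_mod_6_diff: "(i::nat) < 6 \<Longrightarrow> j < 6 \<Longrightarrow> (i + (j + 6 - i) mod 6) mod 6 = j"
  unfolding less_6_cases by (elim disjE; simp)

lemma phc_E_sym: "phc_E c t x y \<Longrightarrow> phc_E c t y x"
  unfolding phc_E_def by (auto split: prod.splits)

lemma phc_V_eq: "phc_V m = {..<m} \<times> {..<6}"
  unfolding phc_V_def by auto

lemma card_phc_V: "card (phc_V m) = m * 6"
  unfolding phc_V_eq by (simp add: card_cartesian_product)

lemma sum_phc_V_Suc: "sum f (phc_V (Suc m)) = sum f (phc_V m) + (\<Sum>j<6. f (m, j))"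
proof -
  have "sum f (phc_V k) = (\<Sum>a<k. \<Sum>j<6. f (a, j))" for k
    unfolding phc_V_eq by (simp add: sum.cartesian_product)
  then show ?thesis by simp
qed

lemma walk_around_hexagon:
  "a < m \<Longrightarrow> i < 6 \<Longrightarrow> walk (phc_V m) (phc_E c t) (a, i) (a, (i + k) mod 6) k"
proof (induction k arbitrary: i)
  case 0
  then show ?case by (auto intro: walk.intros simp: phc_V_def)
next
  case (Suc k)
  have "walk (phc_V m) (phc_E c t) (a, (i + 1) mod 6) (a, ((i + 1) mod 6 + k) mod 6) k"
    using Suc by auto
  moreover have "((i + 1) mod 6 + k) mod 6 = (i + Suc k) mod 6"
    by (simp add: mod_add_left_eq)
  moreover have "phc_E c t (a, i) (a, (i + 1) mod 6)"
    by (simp add: phc_E_def)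
  ultimately show ?case
    using Suc.prems by (auto intro: walk.intros simp: phc_V_def)
qed

lemma walk_in_hexagon:
  assumes "a < m" "i < 6" "j < 6"
  shows "walk (phc_V m) (phc_E c t) (a, i) (a, j) (hex_dist i j)"
proof -
  have "walk (phc_V m) (phc_E c t) (a, i) (a, j) ((j + 6 - i) mod 6)"
    using walk_around_hexagon[OF assms(1,2)] add_mod_6_diff[OF assms(2,3)] by metis
  moreover have "walk (phc_V m) (phc_E c t) (a, j) (a, i) ((i + 6 - j) mod 6)"
    using walk_around_hexagon[OF assms(1,3)] add_mod_6_diff[OF assms(3,2)] by metis
  then have "walk (phc_V m) (phc_E c t) (a, i) (a, j) ((i + 6 - j) mod 6)"
    using walk_rev[of "phc_E c t"] phc_E_sym by blast
  ultimately show ?thesis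
    unfolding hex_dist_def min_def by auto
qed

definition phc_wf :: "nat \<Rightarrow> (nat \<Rightarrow> nat) \<Rightarrow> (nat \<Rightarrow> nat) \<Rightarrow> bool" where
  "phc_wf m c t = (\<forall>k. 1 \<le> k \<and> k < m \<longrightarrow> c k < 6 \<and> t k < 6)"

lemma phc_wf_mono: "phc_wf n c t \<Longrightarrow> m \<le> n \<Longrightarrow> phc_wf m c t"
  unfolding phc_wf_def by auto

lemma phc_valid_imp_phc_wf: "phc_valid n c t \<Longrightarrow> phc_wf n c t"
  unfolding phc_valid_def phc_wf_def by auto

function chain_dist :: "(nat \<Rightarrow> nat) \<Rightarrow> (nat \<Rightarrow> nat) \<Rightarrow> nat \<times> nat \<Rightarrow> nat \<times> nat \<Rightarrow> nat" where
  "chain_dist c t (a, i) (b, j) =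
     (if a = b then hex_dist i j
      else if a < b then hex_dist i (t (Suc a)) + 1 + chain_dist c t (Suc a, c (Suc a)) (b, j)
      else hex_dist i (c a) + 1 + chain_dist c t (a - 1, t a) (b, j))"
  by pat_completeness auto
termination
  by (relation "measure (\<lambda>(c, t, (a, i), (b, j)). if a < b then b - a else a - b)") auto

declare chain_dist.simps [simp del]

lemma chain_dist_same [simp]: "chain_dist c t (a, i) (a, j) = hex_dist i j"
  by (simp add: chain_dist.simps)

lemma chain_dist_less:
  "a < b \<Longrightarrow> chain_dist c t (a, i) (b, j)
     = hex_dist i (t (Suc a)) + 1 + chain_dist c t (Suc a, c (Suc a)) (b, j)"
  by (simp add: chain_dist.simps)

lemma chain_dist_greater:
  "b < a \<Longrightarrow> chain_dist c t (a, i) (b, j)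
     = hex_dist i (c a) + 1 + chain_dist c t (a - 1, t a) (b, j)"
  by (simp add: chain_dist.simps)

lemma walk_chain_dist:
  "phc_wf m c t \<Longrightarrow> u \<in> phc_V m \<Longrightarrow> v \<in> phc_V m
    \<Longrightarrow> walk (phc_V m) (phc_E c t) u v (chain_dist c t u v)"
proof (induction c t u v rule: chain_dist.induct)
  case (1 c t a i b j)
  then have ab: "a < m" "b < m" and ij: "i < 6" "j < 6"
    by (auto simp: phc_V_def)
  consider "a = b" | "a < b" | "b < a" by linarith
  then show ?case
  proof cases
    case 1
    then show ?thesis using ab ij walk_in_hexagon by simp
  next
    case less: 2
    then have ports: "c (Suc a) < 6" "t (Suc a) < 6"
      using "1.prems"(1) ab unfolding phc_wf_def by auto
    have "walk (phc_V m) (phc_E c t) (Suc a, c (Suc a)) (b, j)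
            (chain_dist c t (Suc a, c (Suc a)) (b, j))"
      using 1 less ports by (auto simp: phc_V_def)
    then have "walk (phc_V m) (phc_E c t) (a, t (Suc a)) (b, j)
                 (Suc (chain_dist c t (Suc a, c (Suc a)) (b, j)))"
      using ab less ports by (intro walk_step) (auto simp: phc_V_def phc_E_def)
    from walk_append[OF walk_in_hexagon[OF ab(1) ij(1) ports(2)] this] show ?thesis
      using less by (simp add: chain_dist_less)
  next
    case greater: 3
    then have ports: "c a < 6" "t a < 6"
      using "1.prems"(1) ab unfolding phc_wf_def by auto
    have "walk (phc_V m) (phc_E c t) (a - 1, t a) (b, j) (chain_dist c t (a - 1, t a) (b, j))"
      using 1 greater ports by (auto simp: phc_V_def)
    then have "walk (phc_V m) (phc_E c t) (a, c a) (b, j) (Suc (chain_dist c t (a - 1, t a) (b, j)))"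
      using ab greater ports by (intro walk_step) (auto simp: phc_V_def phc_E_def)
    from walk_append[OF walk_in_hexagon[OF ab(1) ij(1) ports(1)] this] show ?thesis
      using greater by (simp add: chain_dist_greater)
  qed
qed

lemma chain_dist_hexagon_triangle:
  assumes "phc_wf m c t" "a < m" "b < m" "i < 6" "i' < 6" "j < 6"
  shows "chain_dist c t (a, i) (b, j) \<le> hex_dist i i' + chain_dist c t (a, i') (b, j)"
proof -
  consider "a = b" | "a < b" | "b < a" by linarith
  then show ?thesis
  proof cases
    case 1
    then show ?thesis using assms hex_dist_triangle by simp
  next
    case 2
    then have "t (Suc a) < 6" using assms unfolding phc_wf_def by auto
    then show ?thesis using 2 assms hex_dist_triangle[of i "t (Suc a)" i'] by (simp add: chain_dist_less)
  next
    case 3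
    then have "c a < 6" using assms unfolding phc_wf_def by auto
    then show ?thesis using 3 assms hex_dist_triangle[of i "c a" i'] by (simp add: chain_dist_greater)
  qed
qed

lemma chain_dist_cut_edge:
  "chain_dist c t (a, t (Suc a)) v \<le> chain_dist c t (Suc a, c (Suc a)) v + 1
   \<and> chain_dist c t (Suc a, c (Suc a)) v \<le> chain_dist c t (a, t (Suc a)) v + 1"
proof (cases v)
  case (Pair b j)
  show ?thesis
  proof (cases "a < b")
    case True
    then show ?thesis using Pair by (simp add: chain_dist_less)
  next
    case False
    then show ?thesis using Pair by (simp add: chain_dist_greater)
  qed
qed

lemma chain_dist_edge:
  assumes "phc_wf m c t" "x \<in> phc_V m" "y \<in> phc_V m" "v \<in> phc_V m" "phc_E c t x y"
  shows "chain_dist c t x v \<le> chain_dist c t y v + 1"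
proof -
  obtain a i a' i' b j where xyv: "x = (a, i)" "y = (a', i')" "v = (b, j)"
    by (metis prod.exhaust)
  then have range: "a < m" "i < 6" "i' < 6" "b < m" "j < 6"
    using assms(2-4) by (auto simp: phc_V_def)
  from assms(5) consider "a' = a" "i' = (i + 1) mod 6 \<or> i = (i' + 1) mod 6"
    | "a' = Suc a" "i = t a'" "i' = c a'" | "a = Suc a'" "i' = t a" "i = c a"
    unfolding xyv phc_E_def by auto
  then show ?thesis
  proof cases
    case 1
    then show ?thesis
      using chain_dist_hexagon_triangle[OF assms(1) range(1,4,2,3,5)]
        hex_dist_adjacent[OF range(2,3)] xyv by simp
  qed (use chain_dist_cut_edge xyv in auto)
qed

lemma gdist_phc_eq_chain_dist:
  assumes "phc_wf m c t" "u \<in> phc_V m" "v \<in> phc_V m"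
  shows "gdist (phc_V m) (phc_E c t) u v = chain_dist c t u v"
proof (rule gdist_eqI[where f = "\<lambda>x. chain_dist c t x v"])
  show "walk (phc_V m) (phc_E c t) u v (chain_dist c t u v)"
    using assms by (rule walk_chain_dist)
  show "chain_dist c t x v \<le> chain_dist c t y v + 1"
    if "x \<in> phc_V m" "y \<in> phc_V m" "phc_E c t x y" for x y
    using chain_dist_edge assms that by blast
  show "chain_dist c t v v = 0"
    by (cases v) simp
qed

lemma gdist_phc_V_Suc:
  assumes "phc_wf (Suc m) c t" "u \<in> phc_V m" "v \<in> phc_V m"
  shows "gdist (phc_V (Suc m)) (phc_E c t) u v = gdist (phc_V m) (phc_E c t) u v"
proof -
  have "phc_wf m c t"
    using phc_wf_mono[OF assms(1)] by simp
  moreover have "u \<in> phc_V (Suc m)" "v \<in> phc_V (Suc m)"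
    using assms(2,3) by (auto simp: phc_V_def)
  ultimately show ?thesis
    using assms by (simp add: gdist_phc_eq_chain_dist)
qed

lemma gdist_last_hexagon:
  assumes "phc_wf (Suc m) c t" "i < 6" "j < 6"
  shows "gdist (phc_V (Suc m)) (phc_E c t) (m, i) (m, j) = hex_dist i j"
  using assms by (subst gdist_phc_eq_chain_dist) (auto simp: phc_V_def)

lemma gdist_to_last_hexagon:
  assumes wf: "phc_wf (Suc m) c t" and u: "u \<in> phc_V m" and j: "j < 6"
  shows "gdist (phc_V (Suc m)) (phc_E c t) u (m, j)
       = gdist (phc_V m) (phc_E c t) u (m - 1, t m) + 1 + hex_dist (c m) j"
proof -
  obtain b i where ub: "u = (b, i)" by fastforce
  with u have "b < m" by (simp add: phc_V_def)
  then have tail: "(m - 1, t m) \<in> phc_V m"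
    using wf unfolding phc_wf_def by (auto simp: phc_V_def)
  have wf_m: "phc_wf m c t"
    using phc_wf_mono[OF wf] by simp
  have mem: "(m, j) \<in> phc_V (Suc m)" "u \<in> phc_V (Suc m)"
    using u j by (auto simp: phc_V_def)
  have "gdist (phc_V (Suc m)) (phc_E c t) u (m, j) = gdist (phc_V (Suc m)) (phc_E c t) (m, j) u"
    by (rule gdist_sym) (rule phc_E_sym)
  also have "\<dots> = chain_dist c t (m, j) u"
    by (rule gdist_phc_eq_chain_dist[OF wf mem])
  also have "\<dots> = hex_dist j (c m) + 1 + chain_dist c t (m - 1, t m) u"
    using \<open>b < m\<close> ub by (simp add: chain_dist_greater)
  also have "chain_dist c t (m - 1, t m) u = gdist (phc_V m) (phc_E c t) u (m - 1, t m)"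
    using gdist_phc_eq_chain_dist[OF wf_m tail u] gdist_sym[of "phc_E c t", OF phc_E_sym]
    by simp
  finally show ?thesis by (simp add: hex_dist_commute)
qed

lemma sum_gdist_to_last_hexagon:
  assumes wf: "phc_wf (Suc m) c t" and u: "u \<in> phc_V m"
  shows "(\<Sum>j<6. gdist (phc_V (Suc m)) (phc_E c t) u (m, j))
       = 6 * gdist (phc_V m) (phc_E c t) u (m - 1, t m) + 15"
proof -
  let ?d = "gdist (phc_V m) (phc_E c t) u (m - 1, t m)"
  have "c m < 6"
    using wf u unfolding phc_wf_def phc_V_def by auto
  have "(\<Sum>j<6. gdist (phc_V (Suc m)) (phc_E c t) u (m, j)) = (\<Sum>j<6. (?d + 1) + hex_dist (c m) j)"
    using gdist_to_last_hexagon[OF wf u] by (intro sum.cong) auto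
  also have "\<dots> = 6 * (?d + 1) + 9"
    by (simp only: sum.distrib sum_hex_dist_from[OF \<open>c m < 6\<close>]) simp
  finally show ?thesis by simp
qed

lemma transmission_phc_V_Suc:
  assumes wf: "phc_wf (Suc m) c t" and x: "x < 6"
  shows "transmission (phc_V (Suc m)) (phc_E c t) (m, x)
       = transmission (phc_V m) (phc_E c t) (m - 1, t m) + 6 * m * (1 + hex_dist (c m) x) + 9"
proof -
  let ?g = "gdist (phc_V m) (phc_E c t)"
  have "transmission (phc_V (Suc m)) (phc_E c t) (m, x)
      = (\<Sum>u\<in>phc_V m. ?g u (m - 1, t m) + (1 + hex_dist (c m) x)) + (\<Sum>j<6. hex_dist j x)"
    unfolding transmission_def sum_phc_V_Suc
    using gdist_to_last_hexagon[OF wf _ x] gdist_last_hexagon[OF wf _ x]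
    by (intro arg_cong2[where f = "(+)"] sum.cong) auto
  also have "\<dots> = transmission (phc_V m) (phc_E c t) (m - 1, t m) + 6 * m * (1 + hex_dist (c m) x) + 9"
    by (simp only: sum.distrib transmission_def sum_hex_dist_to[OF x]) (simp add: card_phc_V)
  finally show ?thesis .
qed

lemma wiener_phc_V_Suc:
  assumes wf: "phc_wf (Suc m) c t"
  shows "wiener (phc_V (Suc m)) (phc_E c t)
       = wiener (phc_V m) (phc_E c t) + 6 * transmission (phc_V m) (phc_E c t) (m - 1, t m)
         + 90 * m + 27"
proof -
  let ?G = "gdist (phc_V (Suc m)) (phc_E c t)" and ?g = "gdist (phc_V m) (phc_E c t)"
  define T where "T = transmission (phc_V m) (phc_E c t) (m - 1, t m)"
  define cross where "cross = (\<Sum>u\<in>phc_V m. \<Sum>j<6. ?G u (m, j))"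
  have "cross = (\<Sum>u\<in>phc_V m. 6 * ?g u (m - 1, t m) + 15)"
    unfolding cross_def using sum_gdist_to_last_hexagon[OF wf] by (rule sum.cong[OF refl])
  also have "\<dots> = 6 * T + 90 * m"
    by (simp add: T_def transmission_def sum.distrib sum_distrib_left card_phc_V)
  finally have cross: "cross = 6 * T + 90 * m" .
  have reverse: "(\<Sum>i<6. \<Sum>v\<in>phc_V m. ?G (m, i) v) = cross"
    unfolding cross_def by (subst sum.swap) (simp add: gdist_sym[of "phc_E c t", OF phc_E_sym])
  have old: "(\<Sum>u\<in>phc_V m. \<Sum>v\<in>phc_V m. ?G u v) = (\<Sum>u\<in>phc_V m. \<Sum>v\<in>phc_V m. ?g u v)"
    using gdist_phc_V_Suc[OF wf] by (intro sum.cong) auto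
  have new: "(\<Sum>i<6. \<Sum>j<6. ?G (m, i) (m, j)) = 54"
    unfolding sum_sum_hex_dist[symmetric] using gdist_last_hexagon[OF wf] by (intro sum.cong) auto
  have "(\<Sum>u\<in>phc_V (Suc m). \<Sum>v\<in>phc_V (Suc m). ?G u v)
      = (\<Sum>u\<in>phc_V m. \<Sum>v\<in>phc_V m. ?g u v) + 2 * cross + 54"
    unfolding sum_phc_V_Suc sum.distrib reverse old new cross_def[symmetric] by simp
  then show ?thesis
    unfolding wiener_def T_def[symmetric] cross by simp
qed

theorem theorem3p1:
  fixes n :: nat and c t :: "nat \<Rightarrow> nat"
  assumes "n \<ge> 2" and "phc_valid n c t"
  shows "(wiener (phc_V n) (phc_E c t)
           = wiener (phc_V (n - 1)) (phc_E c t)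
             + 6 * transmission (phc_V (n - 1)) (phc_E c t) (n - 2, t (n - 1))
             + 90 * n - 63)
       \<and> (\<forall>x. x < 6 \<and> x \<noteq> c (n - 1) \<longrightarrow>
           transmission (phc_V n) (phc_E c t) (n - 1, x)
           = transmission (phc_V (n - 1)) (phc_E c t) (n - 2, t (n - 1))
             + (if gdist (phc_V n) (phc_E c t) (n - 1, x) (n - 1, c (n - 1)) = 1
                  then 12 * (n - 1) + 9
                else if gdist (phc_V n) (phc_E c t) (n - 1, x) (n - 1, c (n - 1)) = 2
                  then 18 * (n - 1) + 9
                else 24 * (n - 1) + 9))
       \<and> wiener (phc_V 1) (phc_E c t) = 27
       \<and> (\<forall>x. x < 6 \<longrightarrow> transmission (phc_V 1) (phc_E c t) (0, x) = 9)"
proof -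
  obtain m where n: "n = Suc m" and "m \<ge> 1" using assms(1) by (cases n) auto
  have wf: "phc_wf (Suc m) c t" using assms(2) n by (simp add: phc_valid_imp_phc_wf)
  have wf1: "phc_wf (Suc 0) c t" by (simp add: phc_wf_def)
  have c: "c m < 6" using wf \<open>m \<ge> 1\<close> by (simp add: phc_wf_def)
  have last: "gdist (phc_V n) (phc_E c t) (m, x) (m, c m) = hex_dist (c m) x" if "x < 6" for x
    using gdist_last_hexagon[OF wf that c] n by (simp add: hex_dist_commute)
  have empty: "wiener (phc_V 0) E = 0" "transmission (phc_V 0) E v = 0" for E v
    by (simp_all add: wiener_def transmission_def phc_V_def)
  show ?thesis
    using wiener_phc_V_Suc[OF wf] transmission_phc_V_Suc[OF wf] last hex_dist_cases[OF c]
      wiener_phc_V_Suc[OF wf1] transmission_phc_V_Suc[OF wf1] \<open>m \<ge> 1\<close>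
    by (auto simp: n empty)
qed

end
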